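(* Let $c$ be the pullback closure operator on $\mathsf{Qnd}$ associated with the reflection $\pi_0\dashv U$. Then: (1) $c_X(\{x\})=[x]_X$ for every quandle $X$ and $x\in X$; (2) for any family $(S_i)_{i\in I}$ of subquandles of $X$, $c_X(\bigvee_{i\in I}S_i)=\bigvee_{i\in I}c_X(S_i)$, where $\bigvee$ denotes the smallest subquandle containing the given ones; (3) for quandles $X_1,\dots,X_n$ and subquandles $M_i\subseteq X_i$, $c_{X}(\prod_{i=1}^n M_i)=\prod_{i=1}^n c_{X_i}(M_i)$ where $X=\prod_{i=1}^n X_i$; (4) for any surjective homomorphism $f\colon X\to Y$ and subquandle $M\subseteq X$, $f(c_X(M))=c_Y(f(M))$.
   Context: A quandle is a set $X$ with two binary operations $\lhd,\lhd^{-1}$ satisfying, for all $x,y,z\in X$: $x\lhd x = x = x\lhd^{-1}x$; $(x\lhd y)\lhd^{-1}y = x = (x\lhd^{-1}y)\lhd y$; $(x\lhd y)\lhd z = (x\lhd z)\lhd(y\lhd z)$ and $(x\lhd^{-1}y)\lhd^{-1}z = (x\lhd^{-1}z)\lhd^{-1}(y\lhd^{-1}z)$. Homomorphisms preserve both operations; $\mathsf{Qnd}$ is the resulting category. A quandle is trivial if $x\lhd y = x = x\lhd^{-1}y$ for all $x,y$; these form the full subcategory $\mathsf{Qnd}^*$, with inclusion $U$. For $x\in X$, the orbit $[x]_X$ is the set of all elements $x\lhd^{\alpha_1}x_1\cdots\lhd^{\alpha_n}x_n$ ($n\ge 0$, $x_i\in X$, $\lhd^{\alpha_i}\in\{\lhd,\lhd^{-1}\}$,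 bracketed from the left). The functor $\pi_0\colon\mathsf{Qnd}\to\mathsf{Qnd}^*$ sends $X$ to the trivial quandle of its orbits and is left adjoint to $U$, with unit $\eta_X\colon X\to U\pi_0(X)$, $x\mapsto[x]_X$. The pullback closure operator $c$: for a subquandle $M\subseteq X$ with inclusion $m$, $c_X(M)$ is the inverse image under $\eta_X$ of the image of $U\pi_0(m)\colon U\pi_0(M)\to U\pi_0(X)$. *)

theory Defs
  imports Main "HOL-Library.FuncSet"
begin

text \<open>A quandle is represented by its carrier set together with the two operations
  (x \<lhd> y written qop X x y, x \<lhd>^-1 y written qinv X x y).\<close>

record 'a qnd =
  qcar :: "'a set"
  qop  :: "'a \<Rightarrow> 'a \<Rightarrow> 'a"
  qinv :: "'a \<Rightarrow> 'a \<Rightarrow> 'a"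

definition quandle :: "'a qnd \<Rightarrow> bool" where
  "quandle X \<longleftrightarrow>
     (\<forall>x\<in>qcar X. \<forall>y\<in>qcar X. qop X x y \<in> qcar X \<and> qinv X x y \<in> qcar X) \<and>
     (\<forall>x\<in>qcar X. qop X x x = x \<and> qinv X x x = x) \<and>
     (\<forall>x\<in>qcar X. \<forall>y\<in>qcar X. qinv X (qop X x y) y = x \<and> qop X (qinv X x y) y = x) \<and>
     (\<forall>x\<in>qcar X. \<forall>y\<in>qcar X. \<forall>z\<in>qcar X.
        qop X (qop X x y) z = qop X (qop X x z) (qop X y z) \<and>
        qinv X (qinv X x y) z = qinv X (qinv X x z) (qinv X y z))"

definition qhom :: "'a qnd \<Rightarrow> 'b qnd \<Rightarrow> ('a \<Rightarrow> 'b) \<Rightarrow> bool" where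
  "qhom X Y f \<longleftrightarrow> (\<forall>x\<in>qcar X. f x \<in> qcar Y) \<and>
     (\<forall>x\<in>qcar X. \<forall>y\<in>qcar X. f (qop X x y) = qop Y (f x) (f y) \<and> f (qinv X x y) = qinv Y (f x) (f y))"

definition subquandle :: "'a set \<Rightarrow> 'a qnd \<Rightarrow> bool" where
  "subquandle M X \<longleftrightarrow> M \<subseteq> qcar X \<and>
     (\<forall>x\<in>M. \<forall>y\<in>M. qop X x y \<in> M \<and> qinv X x y \<in> M)"

definition subqnd :: "'a qnd \<Rightarrow> 'a set \<Rightarrow> 'a qnd" where
  "subqnd X M = X\<lparr>qcar := M\<rparr>"

definition sub_gen :: "'a qnd \<Rightarrow> 'a set \<Rightarrow> 'a set" where
  "sub_gen X A = \<Inter>{M. subquandle M X \<and> A \<subseteq> M}"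

text \<open>Orbit [x]_X: all x \<lhd>^{a1} x1 ... \<lhd>^{an} xn, bracketed from the left.\<close>
inductive_set orbit :: "'a qnd \<Rightarrow> 'a \<Rightarrow> 'a set" for X :: "'a qnd" and x :: 'a where
  orbit_base: "x \<in> orbit X x"
| orbit_op: "y \<in> orbit X x \<Longrightarrow> z \<in> qcar X \<Longrightarrow> qop X y z \<in> orbit X x"
| orbit_inv: "y \<in> orbit X x \<Longrightarrow> z \<in> qcar X \<Longrightarrow> qinv X y z \<in> orbit X x"

text \<open>U pi_0(X): the (underlying set of the trivial quandle of) orbits; unit eta_X.\<close>
definition pi0 :: "'a qnd \<Rightarrow> 'a set set" where
  "pi0 X = orbit X ` qcar X"

definition eta :: "'a qnd \<Rightarrow> 'a \<Rightarrow> 'a set" where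
  "eta X x = orbit X x"

text \<open>pi_0 on morphisms: [a]_X \<mapsto> [f a]_Y.\<close>
definition pi0_map :: "'a qnd \<Rightarrow> 'b qnd \<Rightarrow> ('a \<Rightarrow> 'b) \<Rightarrow> 'a set \<Rightarrow> 'b set" where
  "pi0_map X Y f o' = orbit Y (f (SOME a. a \<in> o'))"

text \<open>Pullback closure: c_X(M) = eta_X^{-1}(image of U pi_0(m)), m the inclusion M \<hookrightarrow> X.\<close>
definition pb_closure :: "'a qnd \<Rightarrow> 'a set \<Rightarrow> 'a set" where
  "pb_closure X M = {x \<in> qcar X. eta X x \<in> pi0_map (subqnd X M) X id ` pi0 (subqnd X M)}"

definition prod_qnd :: "nat \<Rightarrow> (nat \<Rightarrow> 'a qnd) \<Rightarrow> (nat \<Rightarrow> 'a) qnd" where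
  "prod_qnd n X = \<lparr> qcar = (\<Pi>\<^sub>E i\<in>{..<n}. qcar (X i)),
     qop = (\<lambda>f g. restrict (\<lambda>i. qop (X i) (f i) (g i)) {..<n}),
     qinv = (\<lambda>f g. restrict (\<lambda>i. qinv (X i) (f i) (g i)) {..<n}) \<rparr>"

end

theory Submission
  imports Defs
begin

text \<open>Unwinding the definitions, \<open>c\<^sub>X(M)\<close> is the union of the \<open>X\<close>-orbits of the
  elements of \<open>M\<close>, because the orbit of \<open>m\<close> in \<open>M\<close> is sent by \<open>\<pi>\<^sub>0\<close> of the inclusion to the orbit
  of \<open>m\<close> in \<open>X\<close>. The four statements then reduce to facts about orbits: a union of orbits is a
  subquandle; an orbit in a finite product is the product of the orbits of the coordinates,
  since by idempotency one coordinate can be moved while all others stay fixed; and a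
  surjective homomorphism maps orbits onto orbits.\<close>

lemma UN_PiE_distrib:
  "(\<Union>m\<in>Pi\<^sub>E I M. Pi\<^sub>E I (\<lambda>i. B i (m i))) = Pi\<^sub>E I (\<lambda>i. \<Union>m\<in>M i. B i m)"
proof
  show "Pi\<^sub>E I (\<lambda>i. \<Union>m\<in>M i. B i m) \<subseteq> (\<Union>m\<in>Pi\<^sub>E I M. Pi\<^sub>E I (\<lambda>i. B i (m i)))"
  proof
    fix g assume "g \<in> Pi\<^sub>E I (\<lambda>i. \<Union>m\<in>M i. B i m)"
    then have "\<forall>i\<in>I. \<exists>m\<in>M i. g i \<in> B i m" "g \<in> extensional I" by (auto simp: PiE_iff)
    then obtain m where "\<forall>i\<in>I. m i \<in> M i \<and> g i \<in> B i (m i)" by metis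
    then have "restrict m I \<in> Pi\<^sub>E I M" "g \<in> Pi\<^sub>E I (\<lambda>i. B i (restrict m I i))"
      using \<open>g \<in> extensional I\<close> by (auto simp: PiE_iff)
    then show "g \<in> (\<Union>m\<in>Pi\<^sub>E I M. Pi\<^sub>E I (\<lambda>i. B i (m i)))" by blast
  qed
qed (auto simp: PiE_iff)

lemma restrict_eq_PiE:
  assumes "x \<in> Pi\<^sub>E I A" and "\<And>i. i \<in> I \<Longrightarrow> f i = x i"
  shows "restrict f I = x"
  using assms by (auto simp: PiE_iff extensional_def)

lemma sub_gen_least: "subquandle M X \<Longrightarrow> A \<subseteq> M \<Longrightarrow> sub_gen X A \<subseteq> M"
  unfolding sub_gen_def by blast

lemma subset_sub_gen: "A \<subseteq> sub_gen X A"
  unfolding sub_gen_def by blast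

lemma sub_gen_subquandle: "subquandle A X \<Longrightarrow> sub_gen X A = A"
  by (simp add: sub_gen_least subset_sub_gen subset_antisym)

lemma orbit_trans:
  assumes "y \<in> orbit X x" and "z \<in> orbit X y"
  shows "z \<in> orbit X x"
  using assms(2) by induction (auto intro: orbit.intros assms(1))

context
  fixes X :: "'a qnd"
  assumes X: "quandle X"
begin

lemma quandle_op_closed: "x \<in> qcar X \<Longrightarrow> y \<in> qcar X \<Longrightarrow> qop X x y \<in> qcar X"
  and quandle_inv_closed: "x \<in> qcar X \<Longrightarrow> y \<in> qcar X \<Longrightarrow> qinv X x y \<in> qcar X"
  and quandle_op_idem: "x \<in> qcar X \<Longrightarrow> qop X x x = x"
  and quandle_inv_idem: "x \<in> qcar X \<Longrightarrow> qinv X x x = x"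
  and quandle_inv_op_cancel: "x \<in> qcar X \<Longrightarrow> y \<in> qcar X \<Longrightarrow> qinv X (qop X x y) y = x"
  and quandle_op_inv_cancel: "x \<in> qcar X \<Longrightarrow> y \<in> qcar X \<Longrightarrow> qop X (qinv X x y) y = x"
  and quandle_op_distrib: "x \<in> qcar X \<Longrightarrow> y \<in> qcar X \<Longrightarrow> z \<in> qcar X \<Longrightarrow>
    qop X (qop X x y) z = qop X (qop X x z) (qop X y z)"
  and quandle_inv_distrib: "x \<in> qcar X \<Longrightarrow> y \<in> qcar X \<Longrightarrow> z \<in> qcar X \<Longrightarrow>
    qinv X (qinv X x y) z = qinv X (qinv X x z) (qinv X y z)"
  using X unfolding quandle_def by meson+

lemma orbit_subset_carrier:
  assumes x: "x \<in> qcar X"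
  shows "orbit X x \<subseteq> qcar X"
proof
  fix y assume "y \<in> orbit X x"
  then show "y \<in> qcar X"
    by induction (auto intro: x quandle_op_closed quandle_inv_closed)
qed

lemma mem_orbit_op: "y \<in> qcar X \<Longrightarrow> z \<in> qcar X \<Longrightarrow> y \<in> orbit X (qop X y z)"
  using orbit_inv[OF orbit_base, where X=X and x="qop X y z" and z=z] by (simp add: quandle_inv_op_cancel)

lemma mem_orbit_inv: "y \<in> qcar X \<Longrightarrow> z \<in> qcar X \<Longrightarrow> y \<in> orbit X (qinv X y z)"
  using orbit_op[OF orbit_base, where X=X and x="qinv X y z" and z=z] by (simp add: quandle_op_inv_cancel)

lemma orbit_sym:
  assumes x: "x \<in> qcar X" and y: "y \<in> orbit X x"
  shows "x \<in> orbit X y"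
  using y
proof induction
  case (orbit_op y z)
  have "y \<in> qcar X" using orbit_op.hyps(1) orbit_subset_carrier[OF x] by blast
  then show ?case using orbit_trans[OF mem_orbit_op orbit_op.IH] orbit_op.hyps(2) by blast
next
  case (orbit_inv y z)
  have "y \<in> qcar X" using orbit_inv.hyps(1) orbit_subset_carrier[OF x] by blast
  then show ?case using orbit_trans[OF mem_orbit_inv orbit_inv.IH] orbit_inv.hyps(2) by blast
qed (rule orbit_base)

lemma orbit_eq:
  assumes x: "x \<in> qcar X" and y: "y \<in> orbit X x"
  shows "orbit X y = orbit X x"
  using orbit_trans[OF y] orbit_trans[OF orbit_sym[OF x y]] by blast

lemma orbit_subqnd_subset:
  assumes "M \<subseteq> qcar X"
  shows "orbit (subqnd X M) m \<subseteq> orbit X m"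
proof
  fix y assume "y \<in> orbit (subqnd X M) m"
  then show "y \<in> orbit X m"
    by induction (use assms in \<open>auto simp: subqnd_def intro: orbit.intros\<close>)
qed

lemma pi0_map_subqnd_orbit:
  assumes M: "M \<subseteq> qcar X" and m: "m \<in> M"
  shows "pi0_map (subqnd X M) X id (orbit (subqnd X M) m) = orbit X m"
proof -
  have "(SOME a. a \<in> orbit (subqnd X M) m) \<in> orbit (subqnd X M) m"
    by (rule someI, rule orbit_base)
  then have "(SOME a. a \<in> orbit (subqnd X M) m) \<in> orbit X m"
    using orbit_subqnd_subset[OF M] by blast
  moreover have "m \<in> qcar X" using M m by blast
  ultimately show ?thesis
    unfolding pi0_map_def id_apply by (rule orbit_eq[rotated])
qed

lemma pb_closure_eq_UN_orbit:
  assumes M: "M \<subseteq> qcar X"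
  shows "pb_closure X M = (\<Union>m\<in>M. orbit X m)"
proof -
  have "pi0_map (subqnd X M) X id ` pi0 (subqnd X M) = orbit X ` M"
    using pi0_map_subqnd_orbit[OF M] by (simp add: pi0_def subqnd_def image_image)
  then have "pb_closure X M = {x \<in> qcar X. \<exists>m\<in>M. orbit X x = orbit X m}"
    by (auto simp: pb_closure_def eta_def)
  also have "\<dots> = (\<Union>m\<in>M. orbit X m)"
  proof (intro equalityI subsetI)
    fix x assume "x \<in> {x \<in> qcar X. \<exists>m\<in>M. orbit X x = orbit X m}"
    then show "x \<in> (\<Union>m\<in>M. orbit X m)" using orbit_base[of x X] by auto
  next
    fix x assume "x \<in> (\<Union>m\<in>M. orbit X m)"
    then obtain m where "m \<in> M" "x \<in> orbit X m" by blast
    then show "x \<in> {x \<in> qcar X. \<exists>m\<in>M. orbit X x = orbit X m}"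
      using M orbit_eq orbit_subset_carrier by blast
  qed
  finally show ?thesis .
qed

lemma pb_closure_singleton: "x \<in> qcar X \<Longrightarrow> pb_closure X {x} = orbit X x"
  by (simp add: pb_closure_eq_UN_orbit)

lemma subquandle_UN_orbit:
  assumes A: "A \<subseteq> qcar X"
  shows "subquandle (\<Union>a\<in>A. orbit X a) X"
  unfolding subquandle_def
proof (intro conjI ballI)
  show "(\<Union>a\<in>A. orbit X a) \<subseteq> qcar X" using orbit_subset_carrier A by blast
  fix x y assume x: "x \<in> (\<Union>a\<in>A. orbit X a)" and y: "y \<in> (\<Union>a\<in>A. orbit X a)"
  have "y \<in> qcar X" using orbit_subset_carrier A y by blast
  with x show "qop X x y \<in> (\<Union>a\<in>A. orbit X a)" and "qinv X x y \<in> (\<Union>a\<in>A. orbit X a)"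
    by (auto intro: orbit.intros)
qed

lemma subquandle_carrier: "subquandle (qcar X) X"
  by (simp add: subquandle_def quandle_op_closed quandle_inv_closed)

lemma sub_gen_subset_carrier: "A \<subseteq> qcar X \<Longrightarrow> sub_gen X A \<subseteq> qcar X"
  using subquandle_carrier by (rule sub_gen_least)

lemma pb_closure_sub_gen:
  assumes A: "A \<subseteq> qcar X"
  shows "pb_closure X (sub_gen X A) = pb_closure X A"
proof -
  have "A \<subseteq> (\<Union>a\<in>A. orbit X a)"
    using orbit_base[of _ X] by fast
  then have sub: "sub_gen X A \<subseteq> (\<Union>a\<in>A. orbit X a)"
    by (rule sub_gen_least[OF subquandle_UN_orbit[OF A]])
  have "(\<Union>a\<in>sub_gen X A. orbit X a) = (\<Union>a\<in>A. orbit X a)"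
  proof (intro equalityI subsetI)
    fix x assume "x \<in> (\<Union>a\<in>sub_gen X A. orbit X a)"
    then obtain b where b: "b \<in> sub_gen X A" and x: "x \<in> orbit X b" by blast
    obtain a where "a \<in> A" and "b \<in> orbit X a" using sub b by blast
    then show "x \<in> (\<Union>a\<in>A. orbit X a)" using orbit_trans[OF _ x] by blast
  next
    fix x assume "x \<in> (\<Union>a\<in>A. orbit X a)"
    then show "x \<in> (\<Union>a\<in>sub_gen X A. orbit X a)" using subset_sub_gen[of A X] by blast
  qed
  then show ?thesis
    using pb_closure_eq_UN_orbit[OF A] pb_closure_eq_UN_orbit[OF sub_gen_subset_carrier[OF A]]
    by simp
qed

lemma subquandle_pb_closure: "M \<subseteq> qcar X \<Longrightarrow> subquandle (pb_closure X M) X"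
  by (simp add: pb_closure_eq_UN_orbit subquandle_UN_orbit)

lemma pb_closure_sub_gen_Union:
  assumes S: "\<forall>i\<in>I. subquandle (S i) X"
  shows "pb_closure X (sub_gen X (\<Union>i\<in>I. S i)) = sub_gen X (\<Union>i\<in>I. pb_closure X (S i))"
proof -
  have SX: "S i \<subseteq> qcar X" if "i \<in> I" for i using S that by (simp add: subquandle_def)
  then have U: "(\<Union>i\<in>I. S i) \<subseteq> qcar X" by blast
  have UN: "pb_closure X (\<Union>i\<in>I. S i) = (\<Union>i\<in>I. pb_closure X (S i))"
    using SX by (simp add: pb_closure_eq_UN_orbit[OF U] pb_closure_eq_UN_orbit UN_UN_flatten)
  have "pb_closure X (sub_gen X (\<Union>i\<in>I. S i)) = pb_closure X (\<Union>i\<in>I. S i)"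
    by (rule pb_closure_sub_gen[OF U])
  also have "\<dots> = sub_gen X (\<Union>i\<in>I. pb_closure X (S i))"
    using subquandle_pb_closure[OF U] by (simp add: UN sub_gen_subquandle)
  finally show ?thesis .
qed

lemma image_orbit:
  assumes f: "qhom X Y f" and surj: "f ` qcar X = qcar Y" and m: "m \<in> qcar X"
  shows "f ` orbit X m = orbit Y (f m)"
proof
  have hom: "f (qop X x z) = qop Y (f x) (f z)" "f (qinv X x z) = qinv Y (f x) (f z)"
    if "x \<in> orbit X m" "z \<in> qcar X" for x z
    using f that orbit_subset_carrier[OF m] by (auto simp: qhom_def)
  show "f ` orbit X m \<subseteq> orbit Y (f m)"
  proof
    fix y assume "y \<in> f ` orbit X m"
    then obtain x where x: "x \<in> orbit X m" and y: "y = f x" by blast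
    from x have "f x \<in> orbit Y (f m)"
      by induction (use f in \<open>auto simp: hom qhom_def intro: orbit.intros\<close>)
    then show "y \<in> orbit Y (f m)" using y by simp
  qed
  show "orbit Y (f m) \<subseteq> f ` orbit X m"
  proof
    fix y assume "y \<in> orbit Y (f m)"
    then show "y \<in> f ` orbit X m"
    proof induction
      case (orbit_op w z)
      then obtain x z' where "x \<in> orbit X m" "w = f x" "z' \<in> qcar X" "z = f z'"
        using surj by blast
      then show ?case by (metis hom(1) image_eqI orbit.orbit_op)
    next
      case (orbit_inv w z)
      then obtain x z' where "x \<in> orbit X m" "w = f x" "z' \<in> qcar X" "z = f z'"
        using surj by blast
      then show ?case by (metis hom(2) image_eqI orbit.orbit_inv)
    qed (use orbit_base[of m X] in blast)
  qed
qed

end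

lemma pb_closure_image:
  assumes X: "quandle X" and Y: "quandle Y" and f: "qhom X Y f" and surj: "f ` qcar X = qcar Y"
    and M: "M \<subseteq> qcar X"
  shows "f ` pb_closure X M = pb_closure Y (f ` M)"
proof -
  have fM: "f ` M \<subseteq> qcar Y" using M surj by blast
  have "f ` pb_closure X M = (\<Union>m\<in>M. f ` orbit X m)"
    by (simp add: pb_closure_eq_UN_orbit[OF X M] image_UN)
  also have "\<dots> = (\<Union>m\<in>M. orbit Y (f m))"
    using M by (intro SUP_cong refl image_orbit[OF X f surj]) blast
  also have "\<dots> = pb_closure Y (f ` M)"
    by (simp add: pb_closure_eq_UN_orbit[OF Y fM] image_image)
  finally show ?thesis .
qed

lemma qcar_prod_qnd [simp]: "qcar (prod_qnd n Xs) = (\<Pi>\<^sub>E i\<in>{..<n}. qcar (Xs i))"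
  and qop_prod_qnd [simp]: "qop (prod_qnd n Xs) f g = (\<lambda>i\<in>{..<n}. qop (Xs i) (f i) (g i))"
  and qinv_prod_qnd [simp]: "qinv (prod_qnd n Xs) f g = (\<lambda>i\<in>{..<n}. qinv (Xs i) (f i) (g i))"
  by (simp_all add: prod_qnd_def)

lemma quandle_prod_qnd:
  assumes "\<forall>i<n. quandle (Xs i)"
  shows "quandle (prod_qnd n Xs)"
  unfolding quandle_def qcar_prod_qnd qop_prod_qnd qinv_prod_qnd
proof (intro conjI ballI)
  have Xs: "quandle (Xs i)" if "i \<in> {..<n}" for i using assms that by simp
  fix x y z assume x: "x \<in> (\<Pi>\<^sub>E i\<in>{..<n}. qcar (Xs i))" and y: "y \<in> (\<Pi>\<^sub>E i\<in>{..<n}. qcar (Xs i))"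
    and z: "z \<in> (\<Pi>\<^sub>E i\<in>{..<n}. qcar (Xs i))"
  note xyz = PiE_mem[OF x] PiE_mem[OF y] PiE_mem[OF z]
  show "(\<lambda>i\<in>{..<n}. qop (Xs i) (x i) (y i)) \<in> (\<Pi>\<^sub>E i\<in>{..<n}. qcar (Xs i))"
    "(\<lambda>i\<in>{..<n}. qinv (Xs i) (x i) (y i)) \<in> (\<Pi>\<^sub>E i\<in>{..<n}. qcar (Xs i))"
    by (auto intro: quandle_op_closed[OF Xs] quandle_inv_closed[OF Xs] xyz)
  show "(\<lambda>i\<in>{..<n}. qinv (Xs i) ((\<lambda>i\<in>{..<n}. qop (Xs i) (x i) (y i)) i) (y i)) = x"
    by (rule restrict_eq_PiE[OF x]) (simp add: quandle_inv_op_cancel[OF Xs] xyz)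
  show "(\<lambda>i\<in>{..<n}. qop (Xs i) ((\<lambda>i\<in>{..<n}. qinv (Xs i) (x i) (y i)) i) (y i)) = x"
    by (rule restrict_eq_PiE[OF x]) (simp add: quandle_op_inv_cancel[OF Xs] xyz)
  show "(\<lambda>i\<in>{..<n}. qop (Xs i) (x i) (x i)) = x"
    by (rule restrict_eq_PiE[OF x]) (simp add: quandle_op_idem[OF Xs] xyz)
  show "(\<lambda>i\<in>{..<n}. qinv (Xs i) (x i) (x i)) = x"
    by (rule restrict_eq_PiE[OF x]) (simp add: quandle_inv_idem[OF Xs] xyz)
  show "(\<lambda>i\<in>{..<n}. qop (Xs i) ((\<lambda>i\<in>{..<n}. qop (Xs i) (x i) (y i)) i) (z i)) =
    (\<lambda>i\<in>{..<n}. qop (Xs i) ((\<lambda>i\<in>{..<n}. qop (Xs i) (x i) (z i)) i) ((\<lambda>i\<in>{..<n}. qop (Xs i) (y i) (z i)) i))"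
    "(\<lambda>i\<in>{..<n}. qinv (Xs i) ((\<lambda>i\<in>{..<n}. qinv (Xs i) (x i) (y i)) i) (z i)) =
    (\<lambda>i\<in>{..<n}. qinv (Xs i) ((\<lambda>i\<in>{..<n}. qinv (Xs i) (x i) (z i)) i) ((\<lambda>i\<in>{..<n}. qinv (Xs i) (y i) (z i)) i))"
    by (intro restrict_ext; simp; rule quandle_op_distrib[OF Xs] quandle_inv_distrib[OF Xs]; simp add: xyz)+
qed

lemma orbit_prod_qnd_subset:
  assumes f: "f \<in> qcar (prod_qnd n Xs)"
  shows "orbit (prod_qnd n Xs) f \<subseteq> (\<Pi>\<^sub>E i\<in>{..<n}. orbit (Xs i) (f i))"
proof
  fix g assume "g \<in> orbit (prod_qnd n Xs) f"
  then show "g \<in> (\<Pi>\<^sub>E i\<in>{..<n}. orbit (Xs i) (f i))"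
    by induction (use f in \<open>auto simp: PiE_iff extensional_def intro: orbit.intros\<close>)
qed

lemma prod_qnd_fun_upd:
  assumes Xs: "\<forall>i<n. quandle (Xs i)" and h: "h \<in> qcar (prod_qnd n Xs)" and j: "j < n"
  shows "qop (prod_qnd n Xs) h (h(j := z)) = h(j := qop (Xs j) (h j) z)"
    and "qinv (prod_qnd n Xs) h (h(j := z)) = h(j := qinv (Xs j) (h j) z)"
proof -
  have idem: "qop (Xs i) (h i) (h i) = h i" "qinv (Xs i) (h i) (h i) = h i" if "i < n" for i
    using Xs h that quandle_op_idem[of "Xs i" "h i"] quandle_inv_idem[of "Xs i" "h i"] by auto
  have undef: "h i = undefined" if "\<not> i < n" for i
    using PiE_arb[OF h[unfolded qcar_prod_qnd]] that by simp
  show "qop (prod_qnd n Xs) h (h(j := z)) = h(j := qop (Xs j) (h j) z)"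
    and "qinv (prod_qnd n Xs) h (h(j := z)) = h(j := qinv (Xs j) (h j) z)"
    using j by (auto simp: fun_eq_iff idem undef)
qed

lemma fun_upd_mem_orbit_prod_qnd:
  assumes Xs: "\<forall>i<n. quandle (Xs i)" and g: "g \<in> qcar (prod_qnd n Xs)" and j: "j < n"
    and y: "y \<in> orbit (Xs j) (g j)"
  shows "g(j := y) \<in> orbit (prod_qnd n Xs) g"
  using y
proof induction
  case orbit_base
  show ?case using orbit.orbit_base[of g] by simp
next
  case (orbit_op w z)
  have "g j \<in> qcar (Xs j)" using g j by auto
  then have "w \<in> qcar (Xs j)"
    using orbit_op.hyps(1) orbit_subset_carrier[OF Xs[rule_format, OF j]] by blast
  then have gw: "g(j := w) \<in> qcar (prod_qnd n Xs)" and gz: "g(j := z) \<in> qcar (prod_qnd n Xs)"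
    using g j orbit_op.hyps(2) by (auto simp: PiE_iff extensional_def)
  have step: "qop (prod_qnd n Xs) (g(j := w)) (g(j := z)) = g(j := qop (Xs j) w z)"
    using prod_qnd_fun_upd(1)[OF Xs gw j, of z] by simp
  show ?case using orbit.orbit_op[OF orbit_op.IH gz] by (simp only: step)
next
  case (orbit_inv w z)
  have "g j \<in> qcar (Xs j)" using g j by auto
  then have "w \<in> qcar (Xs j)"
    using orbit_inv.hyps(1) orbit_subset_carrier[OF Xs[rule_format, OF j]] by blast
  then have gw: "g(j := w) \<in> qcar (prod_qnd n Xs)" and gz: "g(j := z) \<in> qcar (prod_qnd n Xs)"
    using g j orbit_inv.hyps(2) by (auto simp: PiE_iff extensional_def)
  have step: "qinv (prod_qnd n Xs) (g(j := w)) (g(j := z)) = g(j := qinv (Xs j) w z)"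
    using prod_qnd_fun_upd(2)[OF Xs gw j, of z] by simp
  show ?case using orbit.orbit_inv[OF orbit_inv.IH gz] by (simp only: step)
qed

lemma orbit_prod_qnd:
  assumes Xs: "\<forall>i<n. quandle (Xs i)" and f: "f \<in> qcar (prod_qnd n Xs)"
  shows "orbit (prod_qnd n Xs) f = (\<Pi>\<^sub>E i\<in>{..<n}. orbit (Xs i) (f i))"
proof
  show "orbit (prod_qnd n Xs) f \<subseteq> (\<Pi>\<^sub>E i\<in>{..<n}. orbit (Xs i) (f i))"
    by (rule orbit_prod_qnd_subset[OF f])
  have f_undef: "f i = undefined" if "n \<le> i" for i
    using PiE_arb[OF f[unfolded qcar_prod_qnd]] that by simp
  \<comment> \<open>induction on the number \<open>k\<close> of leading coordinates in which \<open>g\<close> may differ from \<open>f\<close>\<close>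
  have agree: "g \<in> orbit (prod_qnd n Xs) f"
    if "g \<in> (\<Pi>\<^sub>E i\<in>{..<n}. orbit (Xs i) (f i))" and "\<forall>i\<ge>k. g i = f i" for g k
    using that
  proof (induction k arbitrary: g)
    case 0
    then have "g = f" by (simp add: fun_eq_iff)
    then show ?case by (simp add: orbit.orbit_base)
  next
    case (Suc k)
    let ?g' = "g(k := f k)"
    have "?g' \<in> (\<Pi>\<^sub>E i\<in>{..<n}. orbit (Xs i) (f i))"
      using Suc.prems(1) f_undef by (auto simp: PiE_iff extensional_def orbit.orbit_base)
    moreover have "\<forall>i\<ge>k. ?g' i = f i"
      using Suc.prems(2) by (auto simp: Suc_le_eq)
    ultimately have g': "?g' \<in> orbit (prod_qnd n Xs) f"
      by (rule Suc.IH)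
    show ?case
    proof (cases "k < n")
      case True
      have "?g' \<in> qcar (prod_qnd n Xs)"
        using g' orbit_subset_carrier[OF quandle_prod_qnd[OF Xs] f] by blast
      moreover have "g k \<in> orbit (Xs k) (?g' k)"
        using Suc.prems(1) True by auto
      ultimately have "?g'(k := g k) \<in> orbit (prod_qnd n Xs) ?g'"
        by (rule fun_upd_mem_orbit_prod_qnd[OF Xs _ True])
      then show ?thesis using orbit_trans[OF g'] by simp
    next
      case False
      then have "g k = f k"
        using PiE_arb[OF Suc.prems(1)] f_undef by simp
      then show ?thesis using g' by (simp only: fun_upd_idem)
    qed
  qed
  show "(\<Pi>\<^sub>E i\<in>{..<n}. orbit (Xs i) (f i)) \<subseteq> orbit (prod_qnd n Xs) f"
  proof
    fix g assume g: "g \<in> (\<Pi>\<^sub>E i\<in>{..<n}. orbit (Xs i) (f i))"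
    moreover have "\<forall>i\<ge>n. g i = f i"
      using PiE_arb[OF g] f_undef by simp
    ultimately show "g \<in> orbit (prod_qnd n Xs) f" by (rule agree)
  qed
qed

lemma pb_closure_prod_qnd:
  assumes Xs: "\<forall>i<n. quandle (Xs i)" and Ms: "\<forall>i<n. Ms i \<subseteq> qcar (Xs i)"
  shows "pb_closure (prod_qnd n Xs) (\<Pi>\<^sub>E i\<in>{..<n}. Ms i) = (\<Pi>\<^sub>E i\<in>{..<n}. pb_closure (Xs i) (Ms i))"
proof -
  have M: "(\<Pi>\<^sub>E i\<in>{..<n}. Ms i) \<subseteq> qcar (prod_qnd n Xs)"
    using Ms by (auto intro: PiE_mono)
  have "pb_closure (prod_qnd n Xs) (\<Pi>\<^sub>E i\<in>{..<n}. Ms i)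
      = (\<Union>m\<in>(\<Pi>\<^sub>E i\<in>{..<n}. Ms i). orbit (prod_qnd n Xs) m)"
    by (rule pb_closure_eq_UN_orbit[OF quandle_prod_qnd[OF Xs] M])
  also have "\<dots> = (\<Union>m\<in>(\<Pi>\<^sub>E i\<in>{..<n}. Ms i). \<Pi>\<^sub>E i\<in>{..<n}. orbit (Xs i) (m i))"
    using M by (intro SUP_cong refl orbit_prod_qnd[OF Xs]) blast
  also have "\<dots> = (\<Pi>\<^sub>E i\<in>{..<n}. \<Union>m\<in>Ms i. orbit (Xs i) m)"
    by (rule UN_PiE_distrib)
  also have "\<dots> = (\<Pi>\<^sub>E i\<in>{..<n}. pb_closure (Xs i) (Ms i))"
    using Xs Ms by (intro PiE_cong) (simp add: pb_closure_eq_UN_orbit)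
  finally show ?thesis .
qed

theorem mainTheorem3:
  shows "(\<forall>(X :: 'a qnd) x. quandle X \<and> x \<in> qcar X \<longrightarrow> pb_closure X {x} = orbit X x)
   \<and> (\<forall>(X :: 'a qnd) (I :: 'i set) (S :: 'i \<Rightarrow> 'a set).
        quandle X \<and> (\<forall>i\<in>I. subquandle (S i) X) \<longrightarrow>
        pb_closure X (sub_gen X (\<Union>i\<in>I. S i)) = sub_gen X (\<Union>i\<in>I. pb_closure X (S i)))
   \<and> (\<forall>(n :: nat) (Xs :: nat \<Rightarrow> 'a qnd) (Ms :: nat \<Rightarrow> 'a set).
        (\<forall>i<n. quandle (Xs i) \<and> subquandle (Ms i) (Xs i)) \<longrightarrow>
        pb_closure (prod_qnd n Xs) (\<Pi>\<^sub>E i\<in>{..<n}. Ms i)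
          = (\<Pi>\<^sub>E i\<in>{..<n}. pb_closure (Xs i) (Ms i)))
   \<and> (\<forall>(X :: 'a qnd) (Y :: 'b qnd) f M.
        quandle X \<and> quandle Y \<and> qhom X Y f \<and> f ` qcar X = qcar Y \<and> subquandle M X \<longrightarrow>
        f ` pb_closure X M = pb_closure Y (f ` M))"
proof (intro conjI allI impI)
  fix X :: "'a qnd" and x
  assume "quandle X \<and> x \<in> qcar X"
  then show "pb_closure X {x} = orbit X x" by (simp add: pb_closure_singleton)
next
  fix X :: "'a qnd" and I :: "'i set" and S
  assume "quandle X \<and> (\<forall>i\<in>I. subquandle (S i) X)"
  then show "pb_closure X (sub_gen X (\<Union>i\<in>I. S i)) = sub_gen X (\<Union>i\<in>I. pb_closure X (S i))"
    by (simp add: pb_closure_sub_gen_Union)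
next
  fix n and Xs :: "nat \<Rightarrow> 'a qnd" and Ms
  assume "\<forall>i<n. quandle (Xs i) \<and> subquandle (Ms i) (Xs i)"
  then show "pb_closure (prod_qnd n Xs) (\<Pi>\<^sub>E i\<in>{..<n}. Ms i) = (\<Pi>\<^sub>E i\<in>{..<n}. pb_closure (Xs i) (Ms i))"
    by (intro pb_closure_prod_qnd) (simp_all add: subquandle_def)
next
  fix X :: "'a qnd" and Y :: "'b qnd" and f M
  assume "quandle X \<and> quandle Y \<and> qhom X Y f \<and> f ` qcar X = qcar Y \<and> subquandle M X"
  then show "f ` pb_closure X M = pb_closure Y (f ` M)"
    by (intro pb_closure_image) (simp_all add: subquandle_def)
qed

end
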